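(* Consider the single-armed lazy restless bandit described in the context with fixed subsidy $\eta$, and let $\kappa=\frac{1}{1-\beta|p_{0,0}-p_{1,0}|}$, $b=\min\left\{1,\frac{R_1-R_0}{\rho_1-\rho_0}\right\}$, $c=\max\left\{1,\frac{R_1-R_0}{\rho_1-\rho_0}\right\}$. If $\beta<\frac{1+b}{4}$ or $0<|p_{0,0}-p_{1,0}|<\frac{1+b}{4}$, then for all $\pi\in[0,1]$, $\left|\frac{\partial V(\pi)}{\partial\pi}\right|,\ \left|\frac{\partial V_S(\pi)}{\partial\pi}\right|,\ \left|\frac{\partial V_{NS}(\pi)}{\partial\pi}\right|\le\kappa c(\rho_1-\rho_0)$, where at points of non-differentiability the right partial derivative is used.
   Context: Single-armed lazy restless bandit: an arm has a hidden state in $\{0,1\}$ evolving as a two-state Markov chain with transition probabilities $p_{i,j}$ ($p_{i,0}+p_{i,1}=1$). During each session the chain makes exactly $K\ge1$ transitions. In each session the decision maker plays the arm or not. If played with the arm in state $i$ at session start, an ACK is received with probability $\rho_i\in[0,1]$ and the expected reward is $R_i$; if not played, subsidy $\eta$ is received and nothing observed. Discount $\beta\in(0,1)$. Standing assumptions: $\rho_0<\rho_1$, $R_0<R_1$. Belief $\pi\in[0,1]$ = probability of state $0$. $R_S(\pi)=\pi R_0+(1-\pi)R_1$, $\rho(\pi)=\pi\rho_0+(1-\pi)\rho_1$, $\gamma_1(\pi)=\frac{(1-\pi)\rho_1p_{1,0}+\pi\rho_0p_{0,0}}{\rho_1(1-\pi)+\rho_0\pi}$, $\gamma_0(\pi)=\frac{(1-\pi)(1-\rho_1)p_{1,0}+\pi(1-\rho_0)p_{0,0}}{(1-\rho_1)(1-\pi)+(1-\rho_0)\pi}$,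 $\gamma_2(\pi)=(p_{0,0}-p_{1,0})^K\pi+p_{1,0}\sum_{j=0}^{K-1}(p_{0,0}-p_{1,0})^j$. $V_S,V_{NS},V$ are the unique bounded solution of $V_S(\pi)=R_S(\pi)+\beta\big(\rho(\pi)V(\gamma_1(\pi))+(1-\rho(\pi))V(\gamma_0(\pi))\big)$, $V_{NS}(\pi)=\eta+\beta V(\gamma_2(\pi))$, $V(\pi)=\max\{V_S(\pi),V_{NS}(\pi)\}$ (a term with zero coefficient is taken to be $0$). *)

theory Defs
  imports "HOL-Analysis.Analysis"
begin

text \<open>Belief pi = probability of state 0.
  Transition probabilities p00 = p_{0,0}, p10 = p_{1,0}.
  Division by zero yields 0 in Isabelle; this only happens when the
  coefficient of the corresponding term is 0, matching the convention
  that a term with zero coefficient is 0.\<close>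

definition RS :: "real \<Rightarrow> real \<Rightarrow> real \<Rightarrow> real" where
  "RS R0 R1 \<pi> = \<pi> * R0 + (1 - \<pi>) * R1"

definition rhoB :: "real \<Rightarrow> real \<Rightarrow> real \<Rightarrow> real" where
  "rhoB \<rho>0 \<rho>1 \<pi> = \<pi> * \<rho>0 + (1 - \<pi>) * \<rho>1"

definition gamma1 :: "real \<Rightarrow> real \<Rightarrow> real \<Rightarrow> real \<Rightarrow> real \<Rightarrow> real" where
  "gamma1 p00 p10 \<rho>0 \<rho>1 \<pi> =
     ((1 - \<pi>) * \<rho>1 * p10 + \<pi> * \<rho>0 * p00) / (\<rho>1 * (1 - \<pi>) + \<rho>0 * \<pi>)"

definition gamma0 :: "real \<Rightarrow> real \<Rightarrow> real \<Rightarrow> real \<Rightarrow> real \<Rightarrow> real" where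
  "gamma0 p00 p10 \<rho>0 \<rho>1 \<pi> =
     ((1 - \<pi>) * (1 - \<rho>1) * p10 + \<pi> * (1 - \<rho>0) * p00)
       / ((1 - \<rho>1) * (1 - \<pi>) + (1 - \<rho>0) * \<pi>)"

definition gamma2 :: "real \<Rightarrow> real \<Rightarrow> nat \<Rightarrow> real \<Rightarrow> real" where
  "gamma2 p00 p10 K \<pi> =
     (p00 - p10) ^ K * \<pi> + p10 * (\<Sum>j<K. (p00 - p10) ^ j)"

end

theory Submission
  imports Defs
begin

text \<open>All three value functions are Lipschitz on the belief interval [0,1] with constant
  L = (R1 - R0) / (1 - \<beta> |p00 - p10|), the fixed point of L \<mapsto> (R1 - R0) + \<beta> |p00 - p10| L,
  and L is at most the claimed bound; a Lipschitz constant bounds every one-sided derivative.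
  Lipschitz continuity comes from value iteration: if V is L-Lipschitz up to an additive
  defect \<delta>, then one Bellman step yields defect \<beta> \<delta>, and a bounded V starts with a finite
  defect. The heart of the step is that the expected continuation value is
  L |p00 - p10|-Lipschitz: couple the ACK/NACK outcomes at two beliefs x \<le> y; since the
  posterior is a martingale, the expected distance moved by the coupled posteriors is
  exactly y - x, and the transition kernel contracts it by |p00 - p10|.\<close>

section \<open>Belief updates\<close>

lemma rhoB_complement: "1 - rhoB \<rho>0 \<rho>1 \<pi> = rhoB (1 - \<rho>0) (1 - \<rho>1) \<pi>"
  unfolding rhoB_def by (simp add: algebra_simps)

lemma gamma0_eq_gamma1_complement: "gamma0 p00 p10 \<rho>0 \<rho>1 = gamma1 p00 p10 (1 - \<rho>0) (1 - \<rho>1)"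
  unfolding gamma0_def gamma1_def ..

lemma rhoB_nonneg:
  assumes "0 \<le> \<rho>0" "0 \<le> \<rho>1" "\<pi> \<in> {0..1}"
  shows "0 \<le> rhoB \<rho>0 \<rho>1 \<pi>"
  using assms unfolding rhoB_def by simp

lemma rhoB_antimono:
  assumes "\<rho>0 \<le> \<rho>1" "x \<le> y"
  shows "rhoB \<rho>0 \<rho>1 y \<le> rhoB \<rho>0 \<rho>1 x"
proof -
  have "rhoB \<rho>0 \<rho>1 x - rhoB \<rho>0 \<rho>1 y = (y - x) * (\<rho>1 - \<rho>0)"
    unfolding rhoB_def by (simp add: algebra_simps)
  moreover have "0 \<le> (y - x) * (\<rho>1 - \<rho>0)" using assms by simp
  ultimately show ?thesis by linarith
qed

lemma gamma1_mem_unit: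
  assumes "0 \<le> p00" "p00 \<le> 1" "0 \<le> p10" "p10 \<le> 1"
    and "0 \<le> \<rho>0" "0 \<le> \<rho>1" and "\<pi> \<in> {0..1}"
  shows "gamma1 p00 p10 \<rho>0 \<rho>1 \<pi> \<in> {0..1}"
proof -
  have "(1 - \<pi>) * \<rho>1 * p10 \<le> (1 - \<pi>) * \<rho>1" "\<pi> * \<rho>0 * p00 \<le> \<pi> * \<rho>0"
    using assms by (simp_all add: mult_left_le)
  then have "(1 - \<pi>) * \<rho>1 * p10 + \<pi> * \<rho>0 * p00 \<le> \<rho>1 * (1 - \<pi>) + \<rho>0 * \<pi>"
    by (simp add: algebra_simps)
  moreover have "0 \<le> (1 - \<pi>) * \<rho>1 * p10 + \<pi> * \<rho>0 * p00"
    using assms by simp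
  ultimately show ?thesis
    unfolding gamma1_def by (auto simp: divide_le_eq_1)
qed

lemma gamma0_mem_unit:
  assumes "0 \<le> p00" "p00 \<le> 1" "0 \<le> p10" "p10 \<le> 1"
    and "\<rho>0 \<le> 1" "\<rho>1 \<le> 1" and "\<pi> \<in> {0..1}"
  shows "gamma0 p00 p10 \<rho>0 \<rho>1 \<pi> \<in> {0..1}"
  unfolding gamma0_eq_gamma1_complement using assms by (intro gamma1_mem_unit) auto

lemma gamma2_Suc: "gamma2 p00 p10 (Suc K) \<pi> = p10 + (p00 - p10) * gamma2 p00 p10 K \<pi>"
  unfolding gamma2_def sum.lessThan_Suc_shift by (simp add: sum_distrib_left algebra_simps)

lemma gamma2_mem_unit:
  assumes p: "0 \<le> p00" "p00 \<le> 1" "0 \<le> p10" "p10 \<le> 1" and "\<pi> \<in> {0..1}"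
  shows "gamma2 p00 p10 K \<pi> \<in> {0..1}"
proof (induction K)
  case 0
  then show ?case using assms by (simp add: gamma2_def)
next
  case (Suc K)
  define t where "t = gamma2 p00 p10 K \<pi>"
  have "p10 + (p00 - p10) * t = t * p00 + (1 - t) * p10"
    by (simp add: algebra_simps)
  moreover have "t * p00 + (1 - t) * p10 \<le> t * 1 + (1 - t) * 1"
    using Suc p unfolding t_def by (intro add_mono mult_left_mono) auto
  moreover have "0 \<le> t * p00 + (1 - t) * p10"
    using Suc p unfolding t_def by simp
  ultimately show ?case
    unfolding gamma2_Suc t_def[symmetric] by simp
qed

lemma gamma2_diff: "gamma2 p00 p10 K x - gamma2 p00 p10 K y = (p00 - p10) ^ K * (x - y)"
  unfolding gamma2_def by (simp add: algebra_simps)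

text \<open>The Bayes posterior of state 0 after an observation of probability \<rho>i in state i:
  ACK for (\<rho>0, \<rho>1), NACK for (1 - \<rho>0, 1 - \<rho>1).\<close>

definition posterior :: "real \<Rightarrow> real \<Rightarrow> real \<Rightarrow> real" where
  "posterior \<rho>0 \<rho>1 \<pi> = \<pi> * \<rho>0 / rhoB \<rho>0 \<rho>1 \<pi>"

lemma posterior_nonneg:
  assumes "0 \<le> \<rho>0" "0 \<le> \<rho>1" "\<pi> \<in> {0..1}"
  shows "0 \<le> posterior \<rho>0 \<rho>1 \<pi>"
  using assms rhoB_nonneg[OF assms] unfolding posterior_def by simp

lemma rhoB_eq_0D:
  assumes "0 \<le> \<rho>0" "0 \<le> \<rho>1" "\<pi> \<in> {0..1}" "rhoB \<rho>0 \<rho>1 \<pi> = 0"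
  shows "\<pi> * \<rho>0 = 0"
proof -
  have "0 \<le> \<pi> * \<rho>0" "0 \<le> (1 - \<pi>) * \<rho>1" using assms by auto
  then show ?thesis using assms(4) unfolding rhoB_def by linarith
qed

lemma rhoB_mult_posterior:
  assumes "0 \<le> \<rho>0" "0 \<le> \<rho>1" "\<pi> \<in> {0..1}"
  shows "rhoB \<rho>0 \<rho>1 \<pi> * posterior \<rho>0 \<rho>1 \<pi> = \<pi> * \<rho>0"
  using rhoB_eq_0D[OF assms] unfolding posterior_def by force

lemma gamma1_eq_posterior:
  assumes "rhoB \<rho>0 \<rho>1 \<pi> \<noteq> 0"
  shows "gamma1 p00 p10 \<rho>0 \<rho>1 \<pi> = p10 + (p00 - p10) * posterior \<rho>0 \<rho>1 \<pi>"
proof -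
  have "\<rho>1 * (1 - \<pi>) + \<rho>0 * \<pi> = rhoB \<rho>0 \<rho>1 \<pi>"
    and "(1 - \<pi>) * \<rho>1 * p10 + \<pi> * \<rho>0 * p00 = p10 * rhoB \<rho>0 \<rho>1 \<pi> + (p00 - p10) * (\<pi> * \<rho>0)"
    unfolding rhoB_def by (simp_all add: algebra_simps)
  then show ?thesis
    using assms unfolding gamma1_def posterior_def by (simp add: add_divide_distrib)
qed

lemma posterior_mono:
  assumes "0 \<le> \<rho>0" "0 \<le> \<rho>1" "0 \<le> x" "x \<le> y" "y \<le> 1"
  shows "posterior \<rho>0 \<rho>1 x \<le> posterior \<rho>0 \<rho>1 y"
proof (cases "rhoB \<rho>0 \<rho>1 x = 0 \<or> rhoB \<rho>0 \<rho>1 y = 0")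
  case True
  have "x * \<rho>0 \<le> y * \<rho>0" using assms by (simp add: mult_right_mono)
  moreover have "x * \<rho>0 = 0 \<or> y * \<rho>0 = 0"
    using True assms rhoB_eq_0D[of \<rho>0 \<rho>1 x] rhoB_eq_0D[of \<rho>0 \<rho>1 y] by auto
  ultimately have "x * \<rho>0 = 0"
    using assms by auto
  then have "posterior \<rho>0 \<rho>1 x = 0" unfolding posterior_def by simp
  then show ?thesis using posterior_nonneg[of \<rho>0 \<rho>1 y] assms by simp
next
  case False
  moreover have "0 \<le> rhoB \<rho>0 \<rho>1 x" "0 \<le> rhoB \<rho>0 \<rho>1 y"
    using rhoB_nonneg assms by auto
  ultimately have "0 < rhoB \<rho>0 \<rho>1 x" "0 < rhoB \<rho>0 \<rho>1 y"
    by auto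
  moreover have "x * \<rho>0 * rhoB \<rho>0 \<rho>1 y \<le> y * \<rho>0 * rhoB \<rho>0 \<rho>1 x"
  proof -
    have "y * \<rho>0 * rhoB \<rho>0 \<rho>1 x - x * \<rho>0 * rhoB \<rho>0 \<rho>1 y = \<rho>0 * \<rho>1 * (y - x)"
      unfolding rhoB_def by (simp add: algebra_simps)
    moreover have "0 \<le> \<rho>0 * \<rho>1 * (y - x)" using assms by simp
    ultimately show ?thesis by linarith
  qed
  ultimately show ?thesis unfolding posterior_def by (simp add: divide_simps)
qed

lemma posterior_le:
  assumes "0 \<le> \<rho>0" "\<rho>0 \<le> \<rho>1" "\<pi> \<in> {0..1}"
  shows "posterior \<rho>0 \<rho>1 \<pi> \<le> \<pi>"
proof (cases "rhoB \<rho>0 \<rho>1 \<pi> = 0")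
  case False
  have "rhoB \<rho>0 \<rho>1 \<pi> = \<rho>0 + (1 - \<pi>) * (\<rho>1 - \<rho>0)"
    unfolding rhoB_def by (simp add: algebra_simps)
  then have "\<rho>0 \<le> rhoB \<rho>0 \<rho>1 \<pi>" using assms by simp
  then have "\<pi> * \<rho>0 \<le> \<pi> * rhoB \<rho>0 \<rho>1 \<pi>" using assms by (simp add: mult_left_mono)
  then show ?thesis
    using False rhoB_nonneg[of \<rho>0 \<rho>1 \<pi>] assms unfolding posterior_def by (simp add: divide_simps)
qed (use assms in \<open>simp add: posterior_def\<close>)

lemma le_posterior:
  assumes "\<rho>1 \<le> \<rho>0" "\<pi> \<in> {0..1}" "0 < rhoB \<rho>0 \<rho>1 \<pi>"
  shows "\<pi> \<le> posterior \<rho>0 \<rho>1 \<pi>"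
proof -
  have "rhoB \<rho>0 \<rho>1 \<pi> = \<rho>0 - (1 - \<pi>) * (\<rho>0 - \<rho>1)"
    unfolding rhoB_def by (simp add: algebra_simps)
  then have "rhoB \<rho>0 \<rho>1 \<pi> \<le> \<rho>0" using assms by simp
  then have "\<pi> * rhoB \<rho>0 \<rho>1 \<pi> \<le> \<pi> * \<rho>0" using assms by (simp add: mult_left_mono)
  then show ?thesis
    using assms unfolding posterior_def by (simp add: divide_simps)
qed

lemma abs_gamma1_diff:
  assumes "0 \<le> \<rho>0" "0 \<le> \<rho>1" "0 \<le> x" "x \<le> y" "y \<le> 1"
    and "rhoB \<rho>0 \<rho>1 x \<noteq> 0" "rhoB \<rho>0 \<rho>1 y \<noteq> 0"
  shows "\<bar>gamma1 p00 p10 \<rho>0 \<rho>1 x - gamma1 p00 p10 \<rho>0 \<rho>1 y\<bar>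
    = \<bar>p00 - p10\<bar> * (posterior \<rho>0 \<rho>1 y - posterior \<rho>0 \<rho>1 x)"
proof -
  have "gamma1 p00 p10 \<rho>0 \<rho>1 x - gamma1 p00 p10 \<rho>0 \<rho>1 y
      = (p00 - p10) * (posterior \<rho>0 \<rho>1 x - posterior \<rho>0 \<rho>1 y)"
    using assms by (simp add: gamma1_eq_posterior algebra_simps)
  then show ?thesis
    using posterior_mono[OF assms(1-5)] by (simp add: abs_mult)
qed

text \<open>The weights \<rho>(y), 1 - \<rho>(x), \<rho>(x) - \<rho>(y) couple the ACK/NACK distributions at x and
  at y; the total cost telescopes because the expected posterior is the prior.\<close>

lemma coupling_cost:
  assumes \<rho>: "0 \<le> \<rho>0" "\<rho>0 \<le> \<rho>1" "\<rho>1 \<le> 1" and xy: "0 \<le> x" "x \<le> y" "y \<le> 1"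
  shows "rhoB \<rho>0 \<rho>1 y * \<bar>gamma1 p00 p10 \<rho>0 \<rho>1 x - gamma1 p00 p10 \<rho>0 \<rho>1 y\<bar>
       + (1 - rhoB \<rho>0 \<rho>1 x) * \<bar>gamma0 p00 p10 \<rho>0 \<rho>1 x - gamma0 p00 p10 \<rho>0 \<rho>1 y\<bar>
       + (rhoB \<rho>0 \<rho>1 x - rhoB \<rho>0 \<rho>1 y) * \<bar>gamma1 p00 p10 \<rho>0 \<rho>1 x - gamma0 p00 p10 \<rho>0 \<rho>1 y\<bar>
     = \<bar>p00 - p10\<bar> * (y - x)"
proof -
  define u where "u = posterior \<rho>0 \<rho>1"
  define v where "v = posterior (1 - \<rho>0) (1 - \<rho>1)"
  define p where "p = rhoB \<rho>0 \<rho>1 x"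
  define q where "q = rhoB \<rho>0 \<rho>1 y"
  let ?d = "\<bar>p00 - p10\<bar>" and ?g1 = "gamma1 p00 p10 \<rho>0 \<rho>1" and ?g0 = "gamma0 p00 p10 \<rho>0 \<rho>1"
  have x01: "x \<in> {0..1}" and y01: "y \<in> {0..1}" using xy by auto
  have \<rho>': "1 - \<rho>1 \<le> 1 - \<rho>0" using \<rho> by simp
  have p_c: "1 - p = rhoB (1 - \<rho>0) (1 - \<rho>1) x" and q_c: "1 - q = rhoB (1 - \<rho>0) (1 - \<rho>1) y"
    unfolding p_def q_def by (rule rhoB_complement)+
  have "q \<le> p" unfolding p_def q_def using rhoB_antimono \<rho> xy by blast
  moreover have "0 \<le> q" "0 \<le> 1 - p"
    unfolding q_def p_c using \<rho> x01 y01 by (auto intro: rhoB_nonneg)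
  ultimately have pq_pos: "0 < p" "0 < 1 - q" if "p \<noteq> q"
    using that by auto
  have ack: "q * \<bar>?g1 x - ?g1 y\<bar> = ?d * (q * (u y - u x))"
  proof (cases "q = 0")
    case False
    then have "0 < p" "0 < q" using \<open>0 \<le> q\<close> \<open>q \<le> p\<close> by auto
    then have "\<bar>?g1 x - ?g1 y\<bar> = ?d * (u y - u x)"
      using abs_gamma1_diff[of \<rho>0 \<rho>1 x y p00 p10] \<rho> xy
      unfolding p_def q_def u_def by simp
    then show ?thesis by simp
  qed simp
  have nack: "(1 - p) * \<bar>?g0 x - ?g0 y\<bar> = ?d * ((1 - p) * (v y - v x))"
  proof (cases "1 - p = 0")
    case False
    then have "0 < 1 - p" "0 < 1 - q" using \<open>0 \<le> 1 - p\<close> \<open>q \<le> p\<close> by auto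
    then have "\<bar>?g0 x - ?g0 y\<bar> = ?d * (v y - v x)"
      using abs_gamma1_diff[of "1 - \<rho>0" "1 - \<rho>1" x y p00 p10] \<rho> xy
      unfolding p_c q_c v_def gamma0_eq_gamma1_complement by simp
    then show ?thesis by simp
  qed simp
  have cross: "(p - q) * \<bar>?g1 x - ?g0 y\<bar> = ?d * ((p - q) * (v y - u x))"
  proof (cases "p = q")
    case False
    have "?g1 x - ?g0 y = (p00 - p10) * (u x - v y)"
      using pq_pos[OF False] gamma1_eq_posterior[of \<rho>0 \<rho>1 x] gamma1_eq_posterior[of "1 - \<rho>0" "1 - \<rho>1" y]
      unfolding p_def q_c u_def v_def gamma0_eq_gamma1_complement by (simp add: algebra_simps)
    moreover have "u x \<le> x" "y \<le> v y"
      unfolding u_def v_def using posterior_le \<rho> x01 le_posterior[OF \<rho>' y01] pq_pos[OF False] q_c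
      by auto
    ultimately show ?thesis using xy \<open>q \<le> p\<close> by (simp add: abs_mult)
  qed simp
  have "q * u y = y * \<rho>0" "p * u x = x * \<rho>0"
    unfolding p_def q_def u_def using rhoB_mult_posterior \<rho> x01 y01 by auto
  moreover have "(1 - q) * v y = y * (1 - \<rho>0)" "(1 - p) * v x = x * (1 - \<rho>0)"
    unfolding p_c q_c v_def using rhoB_mult_posterior \<rho> x01 y01 by auto
  ultimately have martingale: "q * u y + (1 - q) * v y = y" "p * u x + (1 - p) * v x = x"
    by (simp_all add: algebra_simps)
  have "q * \<bar>?g1 x - ?g1 y\<bar> + (1 - p) * \<bar>?g0 x - ?g0 y\<bar> + (p - q) * \<bar>?g1 x - ?g0 y\<bar>
      = ?d * ((q * u y + (1 - q) * v y) - (p * u x + (1 - p) * v x))"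
    unfolding ack nack cross by (simp add: algebra_simps)
  also have "\<dots> = ?d * (y - x)"
    unfolding martingale ..
  finally show ?thesis
    unfolding p_def q_def .
qed

section \<open>Lipschitz continuity up to an additive defect\<close>

definition approx_lipschitz_on :: "real \<Rightarrow> real \<Rightarrow> real set \<Rightarrow> (real \<Rightarrow> real) \<Rightarrow> bool" where
  "approx_lipschitz_on L \<delta> S f \<longleftrightarrow> (\<forall>x\<in>S. \<forall>y\<in>S. \<bar>f x - f y\<bar> \<le> L * \<bar>x - y\<bar> + \<delta>)"

lemma approx_lipschitz_onD:
  "approx_lipschitz_on L \<delta> S f \<Longrightarrow> x \<in> S \<Longrightarrow> y \<in> S \<Longrightarrow> \<bar>f x - f y\<bar> \<le> L * \<bar>x - y\<bar> + \<delta>"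
  unfolding approx_lipschitz_on_def by blast

lemma approx_lipschitz_on_leI:
  assumes "\<And>x y. x \<in> S \<Longrightarrow> y \<in> S \<Longrightarrow> x \<le> y \<Longrightarrow> \<bar>f x - f y\<bar> \<le> L * \<bar>x - y\<bar> + \<delta>"
  shows "approx_lipschitz_on L \<delta> S f"
  unfolding approx_lipschitz_on_def by (metis assms abs_minus_commute linorder_le_cases)

lemma approx_lipschitz_on_max:
  assumes "approx_lipschitz_on L \<delta> S f" "approx_lipschitz_on L \<delta> S g"
  shows "approx_lipschitz_on L \<delta> S (\<lambda>x. max (f x) (g x))"
  using assms unfolding approx_lipschitz_on_def by (smt (verit, best))

lemma lipschitz_on_of_approx:
  assumes approx: "\<And>n. approx_lipschitz_on L (\<beta> ^ n * M) S f"
    and "0 \<le> L" "0 \<le> \<beta>" "\<beta> < 1"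
  shows "L-lipschitz_on S f"
proof (rule lipschitz_onI)
  fix x y assume "x \<in> S" "y \<in> S"
  have "(\<lambda>n. L * \<bar>x - y\<bar> + \<beta> ^ n * M) \<longlonglongrightarrow> L * \<bar>x - y\<bar> + 0 * M"
    using assms by (intro tendsto_intros LIMSEQ_power_zero) auto
  moreover have "\<bar>f x - f y\<bar> \<le> L * \<bar>x - y\<bar> + \<beta> ^ n * M" for n
    using approx_lipschitz_onD[OF approx \<open>x \<in> S\<close> \<open>y \<in> S\<close>] .
  ultimately have "\<bar>f x - f y\<bar> \<le> L * \<bar>x - y\<bar>"
    using LIMSEQ_le_const by fastforce
  then show "dist (f x) (f y) \<le> L * dist x y"
    by (simp add: dist_real_def)
qed fact

lemma lipschitz_on_iff_approx_lipschitz_on_0: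
  "0 \<le> L \<Longrightarrow> L-lipschitz_on S f \<longleftrightarrow> approx_lipschitz_on L 0 S f"
  unfolding lipschitz_on_def approx_lipschitz_on_def dist_real_def by simp

lemma mixture_diff_le:
  assumes f: "approx_lipschitz_on L \<delta> S f"
    and S: "a1 \<in> S" "a0 \<in> S" "b1 \<in> S" "b0 \<in> S"
    and pq: "0 \<le> q" "q \<le> p" "p \<le> 1"
  shows "\<bar>(p * f a1 + (1 - p) * f a0) - (q * f b1 + (1 - q) * f b0)\<bar>
    \<le> L * (q * \<bar>a1 - b1\<bar> + (1 - p) * \<bar>a0 - b0\<bar> + (p - q) * \<bar>a1 - b0\<bar>) + \<delta>"
proof -
  have "(p * f a1 + (1 - p) * f a0) - (q * f b1 + (1 - q) * f b0)
      = q * (f a1 - f b1) + (1 - p) * (f a0 - f b0) + (p - q) * (f a1 - f b0)"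
    by (simp add: algebra_simps)
  also have "\<bar>\<dots>\<bar> \<le> \<bar>q * (f a1 - f b1)\<bar> + \<bar>(1 - p) * (f a0 - f b0)\<bar> + \<bar>(p - q) * (f a1 - f b0)\<bar>"
    by (rule order_trans[OF abs_triangle_ineq add_right_mono[OF abs_triangle_ineq]])
  also have "\<dots> = q * \<bar>f a1 - f b1\<bar> + (1 - p) * \<bar>f a0 - f b0\<bar> + (p - q) * \<bar>f a1 - f b0\<bar>"
    using pq by (simp add: abs_mult)
  also have "\<dots> \<le> q * (L * \<bar>a1 - b1\<bar> + \<delta>) + (1 - p) * (L * \<bar>a0 - b0\<bar> + \<delta>) + (p - q) * (L * \<bar>a1 - b0\<bar> + \<delta>)"
    using pq approx_lipschitz_onD[OF f] S by (intro add_mono mult_left_mono) auto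
  also have "\<dots> = L * (q * \<bar>a1 - b1\<bar> + (1 - p) * \<bar>a0 - b0\<bar> + (p - q) * \<bar>a1 - b0\<bar>) + \<delta>"
    by (simp add: algebra_simps)
  finally show ?thesis .
qed

section \<open>The value functions\<close>

definition continuation :: "real \<Rightarrow> real \<Rightarrow> real \<Rightarrow> real \<Rightarrow> (real \<Rightarrow> real) \<Rightarrow> real \<Rightarrow> real" where
  "continuation p00 p10 \<rho>0 \<rho>1 V \<pi> =
     rhoB \<rho>0 \<rho>1 \<pi> * V (gamma1 p00 p10 \<rho>0 \<rho>1 \<pi>) + (1 - rhoB \<rho>0 \<rho>1 \<pi>) * V (gamma0 p00 p10 \<rho>0 \<rho>1 \<pi>)"

lemma approx_lipschitz_continuation:
  assumes p: "0 \<le> p00" "p00 \<le> 1" "0 \<le> p10" "p10 \<le> 1"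
    and \<rho>: "0 \<le> \<rho>0" "\<rho>0 \<le> \<rho>1" "\<rho>1 \<le> 1"
    and V: "approx_lipschitz_on L \<delta> {0..1} V"
  shows "approx_lipschitz_on (L * \<bar>p00 - p10\<bar>) \<delta> {0..1} (continuation p00 p10 \<rho>0 \<rho>1 V)"
proof (rule approx_lipschitz_on_leI)
  fix x y :: real assume x: "x \<in> {0..1}" and y: "y \<in> {0..1}" and "x \<le> y"
  have weights: "0 \<le> rhoB \<rho>0 \<rho>1 y" "rhoB \<rho>0 \<rho>1 y \<le> rhoB \<rho>0 \<rho>1 x" "rhoB \<rho>0 \<rho>1 x \<le> 1"
    using rhoB_nonneg[of \<rho>0 \<rho>1 y] rhoB_antimono[OF \<rho>(2) \<open>x \<le> y\<close>]
      rhoB_nonneg[of "1 - \<rho>0" "1 - \<rho>1" x] rhoB_complement[of \<rho>0 \<rho>1 x] \<rho> x y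
    by auto
  have gamma_mem: "gamma1 p00 p10 \<rho>0 \<rho>1 t \<in> {0..1}" "gamma0 p00 p10 \<rho>0 \<rho>1 t \<in> {0..1}"
    if "t \<in> {0..1}" for t
    using gamma1_mem_unit gamma0_mem_unit p \<rho> that by auto
  have "0 \<le> x" "y \<le> 1" using x y by auto
  note cost = coupling_cost[OF \<rho> this(1) \<open>x \<le> y\<close> this(2)]
  from mixture_diff_le[OF V gamma_mem[OF x] gamma_mem[OF y] weights]
  show "\<bar>continuation p00 p10 \<rho>0 \<rho>1 V x - continuation p00 p10 \<rho>0 \<rho>1 V y\<bar>
      \<le> L * \<bar>p00 - p10\<bar> * \<bar>x - y\<bar> + \<delta>"
    unfolding continuation_def cost using \<open>x \<le> y\<close> by (simp add: mult.assoc)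
qed

locale lazy_bandit =
  fixes p00 p10 \<rho>0 \<rho>1 R0 R1 \<eta> \<beta> :: real and K :: nat and V VS VNS :: "real \<Rightarrow> real"
  assumes p: "0 \<le> p00" "p00 \<le> 1" "0 \<le> p10" "p10 \<le> 1"
    and \<rho>: "0 \<le> \<rho>0" "\<rho>0 \<le> \<rho>1" "\<rho>1 \<le> 1"
    and R: "R0 \<le> R1"
    and \<beta>: "0 \<le> \<beta>" "\<beta> < 1"
    and V_bounded: "bounded (V ` {0..1})"
    and VS_eq: "\<And>\<pi>. \<pi> \<in> {0..1} \<Longrightarrow> VS \<pi> = RS R0 R1 \<pi> + \<beta> * continuation p00 p10 \<rho>0 \<rho>1 V \<pi>"
    and VNS_eq: "\<And>\<pi>. \<pi> \<in> {0..1} \<Longrightarrow> VNS \<pi> = \<eta> + \<beta> * V (gamma2 p00 p10 K \<pi>)"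
    and V_eq: "\<And>\<pi>. \<pi> \<in> {0..1} \<Longrightarrow> V \<pi> = max (VS \<pi>) (VNS \<pi>)"
begin

lemma approx_lipschitz_VS:
  assumes V: "approx_lipschitz_on L \<delta> {0..1} V"
    and L: "R1 - R0 + \<beta> * \<bar>p00 - p10\<bar> * L \<le> L"
  shows "approx_lipschitz_on L (\<beta> * \<delta>) {0..1} VS"
  unfolding approx_lipschitz_on_def
proof (intro ballI)
  fix x y :: real assume x: "x \<in> {0..1}" and y: "y \<in> {0..1}"
  let ?C = "continuation p00 p10 \<rho>0 \<rho>1 V"
  have "VS x - VS y = (R0 - R1) * (x - y) + \<beta> * (?C x - ?C y)"
    using VS_eq[OF x] VS_eq[OF y] unfolding RS_def by (simp add: algebra_simps)
  also have "\<bar>\<dots>\<bar> \<le> (R1 - R0) * \<bar>x - y\<bar> + \<beta> * \<bar>?C x - ?C y\<bar>"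
    using R \<beta> by (auto intro: order_trans[OF abs_triangle_ineq] simp: abs_mult)
  also have "\<dots> \<le> (R1 - R0) * \<bar>x - y\<bar> + \<beta> * (L * \<bar>p00 - p10\<bar> * \<bar>x - y\<bar> + \<delta>)"
    using approx_lipschitz_onD[OF approx_lipschitz_continuation[OF p \<rho> V] x y] \<beta>
    by (simp add: mult_left_mono)
  also have "\<dots> = (R1 - R0 + \<beta> * \<bar>p00 - p10\<bar> * L) * \<bar>x - y\<bar> + \<beta> * \<delta>"
    by (simp add: algebra_simps)
  also have "\<dots> \<le> L * \<bar>x - y\<bar> + \<beta> * \<delta>"
    using L by (simp add: mult_right_mono)
  finally show "\<bar>VS x - VS y\<bar> \<le> L * \<bar>x - y\<bar> + \<beta> * \<delta>" .
qed

lemma approx_lipschitz_VNS: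
  assumes V: "approx_lipschitz_on L \<delta> {0..1} V" and "0 \<le> L"
  shows "approx_lipschitz_on L (\<beta> * \<delta>) {0..1} VNS"
  unfolding approx_lipschitz_on_def
proof (intro ballI)
  fix x y :: real assume x: "x \<in> {0..1}" and y: "y \<in> {0..1}"
  let ?g = "gamma2 p00 p10 K"
  have "\<bar>p00 - p10\<bar> ^ K \<le> 1"
    using p by (intro power_le_one) auto
  then have "\<beta> * \<bar>p00 - p10\<bar> ^ K \<le> 1"
    using \<beta> by (simp add: mult_le_one)
  then have "(\<beta> * \<bar>p00 - p10\<bar> ^ K) * (L * \<bar>x - y\<bar>) \<le> L * \<bar>x - y\<bar>"
    using \<beta> \<open>0 \<le> L\<close> by (simp add: mult_left_le_one_le)
  then have "\<beta> * (L * \<bar>?g x - ?g y\<bar>) \<le> L * \<bar>x - y\<bar>"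
    unfolding gamma2_diff by (simp add: abs_mult power_abs mult_ac)
  moreover have "\<bar>VNS x - VNS y\<bar> = \<beta> * \<bar>V (?g x) - V (?g y)\<bar>"
    using VNS_eq[OF x] VNS_eq[OF y] \<beta> by (simp add: abs_mult flip: right_diff_distrib)
  moreover have "\<bar>V (?g x) - V (?g y)\<bar> \<le> L * \<bar>?g x - ?g y\<bar> + \<delta>"
    using approx_lipschitz_onD[OF V] gamma2_mem_unit[OF p] x y by blast
  ultimately show "\<bar>VNS x - VNS y\<bar> \<le> L * \<bar>x - y\<bar> + \<beta> * \<delta>"
    using mult_left_mono[OF _ \<beta>(1)] by (fastforce simp: distrib_left)
qed

lemma approx_lipschitz_V_step:
  assumes "approx_lipschitz_on L \<delta> {0..1} V"
    and "0 \<le> L" "R1 - R0 + \<beta> * \<bar>p00 - p10\<bar> * L \<le> L"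
  shows "approx_lipschitz_on L (\<beta> * \<delta>) {0..1} V"
proof -
  have "approx_lipschitz_on L (\<beta> * \<delta>) {0..1} (\<lambda>\<pi>. max (VS \<pi>) (VNS \<pi>))"
    using assms by (intro approx_lipschitz_on_max approx_lipschitz_VS approx_lipschitz_VNS)
  then show ?thesis
    unfolding approx_lipschitz_on_def using V_eq by simp
qed

lemma lipschitz_V:
  assumes "0 \<le> L" "R1 - R0 + \<beta> * \<bar>p00 - p10\<bar> * L \<le> L"
  shows "L-lipschitz_on {0..1} V"
proof -
  obtain B where B: "\<forall>x\<in>{0..1}. \<bar>V x\<bar> \<le> B"
    using V_bounded unfolding bounded_iff by auto
  have "approx_lipschitz_on L (\<beta> ^ n * (2 * B)) {0..1} V" for n
  proof (induction n)
    case 0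
    have "\<bar>V x - V y\<bar> \<le> L * \<bar>x - y\<bar> + 2 * B" if "x \<in> {0..1}" "y \<in> {0..1}" for x y
      using B that \<open>0 \<le> L\<close> by (smt (verit) mult_nonneg_nonneg abs_ge_zero)
    then show ?case unfolding approx_lipschitz_on_def by simp
  next
    case (Suc n)
    then show ?case
      using approx_lipschitz_V_step[OF _ assms] by (simp add: mult.assoc)
  qed
  then show ?thesis
    using lipschitz_on_of_approx assms \<beta> by blast
qed

lemma discount_contraction: "\<beta> * \<bar>p00 - p10\<bar> < 1"
proof -
  have "\<bar>p00 - p10\<bar> \<le> 1" using p by linarith
  then have "\<beta> * \<bar>p00 - p10\<bar> \<le> \<beta>" using \<beta> by (simp add: mult_left_le)
  then show ?thesis using \<beta> by linarith
qed

lemma lipschitz_value_functions: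
  assumes "f \<in> {V, VS, VNS}"
  shows "((R1 - R0) / (1 - \<beta> * \<bar>p00 - p10\<bar>))-lipschitz_on {0..1} f"
proof -
  define L where "L = (R1 - R0) / (1 - \<beta> * \<bar>p00 - p10\<bar>)"
  have "0 \<le> L" and fixpoint: "R1 - R0 + \<beta> * \<bar>p00 - p10\<bar> * L = L"
    unfolding L_def using R discount_contraction by (simp_all add: field_simps)
  then have "approx_lipschitz_on L 0 {0..1} V"
    using lipschitz_V lipschitz_on_iff_approx_lipschitz_on_0 by simp
  then have "approx_lipschitz_on L 0 {0..1} f"
    using assms approx_lipschitz_VS approx_lipschitz_VNS \<open>0 \<le> L\<close> fixpoint
    by (metis empty_iff insert_iff mult_zero_right order_refl)
  then show ?thesis
    unfolding L_def[symmetric] using lipschitz_on_iff_approx_lipschitz_on_0 \<open>0 \<le> L\<close> by blast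
qed

end

section \<open>Derivatives of Lipschitz functions\<close>

lemma lipschitz_on_derivative_bound:
  fixes f :: "real \<Rightarrow> real"
  assumes f: "L-lipschitz_on S f" and "x \<in> S"
    and D: "(f has_real_derivative D) (at x within T)"
    and nontrivial: "at x within T \<noteq> bot" and in_S: "\<forall>\<^sub>F y in at x within T. y \<in> S"
  shows "\<bar>D\<bar> \<le> L"
proof -
  have "((\<lambda>y. \<bar>(f y - f x) / (y - x)\<bar>) \<longlongrightarrow> \<bar>D\<bar>) (at x within T)"
    using D by (intro tendsto_rabs) (simp add: has_field_derivative_iff)
  moreover have "\<forall>\<^sub>F y in at x within T. y \<noteq> x"
    by (simp add: eventually_at_filter)
  with in_S have "\<forall>\<^sub>F y in at x within T. \<bar>(f y - f x) / (y - x)\<bar> \<le> L"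
  proof eventually_elim
    case (elim y)
    then have "\<bar>f y - f x\<bar> \<le> L * \<bar>y - x\<bar>"
      using lipschitz_onD[OF f _ \<open>x \<in> S\<close>] by (simp add: dist_real_def)
    then show ?case using elim by (simp add: abs_divide divide_le_eq)
  qed
  ultimately show ?thesis
    using tendsto_upperbound nontrivial by blast
qed

lemma lipschitz_on_Icc_derivative_bound:
  fixes f :: "real \<Rightarrow> real"
  assumes f: "L-lipschitz_on {a..b} f" and "a < b" and x: "x \<in> {a..b}"
    and D: "(f has_real_derivative D) (at x within {a..b}) \<or> (x < b \<and> (f has_real_derivative D) (at_right x))"
  shows "\<bar>D\<bar> \<le> L"
  using D
proof
  assume "(f has_real_derivative D) (at x within {a..b})"
  then show ?thesis
    using lipschitz_on_derivative_bound[OF f x] \<open>a < b\<close> x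
    by (simp add: trivial_limit_within eventually_at_filter)
next
  assume right: "x < b \<and> (f has_real_derivative D) (at_right x)"
  have "\<forall>\<^sub>F y in at_right x. y \<in> {a..b}"
    unfolding eventually_at_right[OF right[THEN conjunct1]] using x right by (auto intro!: exI[of _ b])
  then show ?thesis
    using lipschitz_on_derivative_bound[OF f x right[THEN conjunct2]] by simp
qed

theorem lemma9:
  fixes p00 p01 p10 p11 \<rho>0 \<rho>1 R0 R1 \<eta> \<beta> :: real
    and K :: nat
    and V VS VNS :: "real \<Rightarrow> real"
  assumes trans: "0 \<le> p00" "0 \<le> p01" "0 \<le> p10" "0 \<le> p11"
      "p00 + p01 = 1" "p10 + p11 = 1"
    and K: "K \<ge> 1"
    and rho: "0 \<le> \<rho>0" "\<rho>1 \<le> 1" "\<rho>0 < \<rho>1"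
    and R: "R0 < R1"
    and beta: "0 < \<beta>" "\<beta> < 1"
    and bdd: "bounded (V ` {0..1})" "bounded (VS ` {0..1})" "bounded (VNS ` {0..1})"
    and eqS: "\<And>\<pi>. \<pi> \<in> {0..1} \<Longrightarrow> VS \<pi> = RS R0 R1 \<pi> + \<beta> *
         (rhoB \<rho>0 \<rho>1 \<pi> * V (gamma1 p00 p10 \<rho>0 \<rho>1 \<pi>)
          + (1 - rhoB \<rho>0 \<rho>1 \<pi>) * V (gamma0 p00 p10 \<rho>0 \<rho>1 \<pi>))"
    and eqNS: "\<And>\<pi>. \<pi> \<in> {0..1} \<Longrightarrow> VNS \<pi> = \<eta> + \<beta> * V (gamma2 p00 p10 K \<pi>)"
    and eqV: "\<And>\<pi>. \<pi> \<in> {0..1} \<Longrightarrow> V \<pi> = max (VS \<pi>) (VNS \<pi>)"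
    and cond: "\<beta> < (1 + min 1 ((R1 - R0) / (\<rho>1 - \<rho>0))) / 4 \<or>
               (0 < \<bar>p00 - p10\<bar> \<and>
                \<bar>p00 - p10\<bar> < (1 + min 1 ((R1 - R0) / (\<rho>1 - \<rho>0))) / 4)"
  shows "\<forall>f \<in> {V, VS, VNS}. \<forall>\<pi> \<in> {0..1}. \<forall>D.
           ((f has_real_derivative D) (at \<pi> within {0..1}) \<or>
            (\<pi> < 1 \<and> (f has_real_derivative D) (at_right \<pi>)))
           \<longrightarrow> \<bar>D\<bar> \<le> (1 / (1 - \<beta> * \<bar>p00 - p10\<bar>))
                      * max 1 ((R1 - R0) / (\<rho>1 - \<rho>0)) * (\<rho>1 - \<rho>0)"
proof (intro ballI allI impI)
  interpret lazy_bandit p00 p10 \<rho>0 \<rho>1 R0 R1 \<eta> \<beta> K V VS VNS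
    using trans rho R beta bdd(1) eqS eqNS eqV by unfold_locales (auto simp: continuation_def)
  fix f \<pi> D
  assume "f \<in> {V, VS, VNS}" "\<pi> \<in> {0..1}"
    and "(f has_real_derivative D) (at \<pi> within {0..1}) \<or> (\<pi> < 1 \<and> (f has_real_derivative D) (at_right \<pi>))"
  then have "\<bar>D\<bar> \<le> (R1 - R0) / (1 - \<beta> * \<bar>p00 - p10\<bar>)"
    using lipschitz_on_Icc_derivative_bound[OF lipschitz_value_functions[of f]] by simp
  also have "\<dots> \<le> max 1 ((R1 - R0) / (\<rho>1 - \<rho>0)) * (\<rho>1 - \<rho>0) / (1 - \<beta> * \<bar>p00 - p10\<bar>)"
  proof -
    have "R1 - R0 = (R1 - R0) / (\<rho>1 - \<rho>0) * (\<rho>1 - \<rho>0)" using rho by simp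
    also have "\<dots> \<le> max 1 ((R1 - R0) / (\<rho>1 - \<rho>0)) * (\<rho>1 - \<rho>0)"
      using rho by (intro mult_right_mono) auto
    finally show ?thesis
      using discount_contraction by (simp add: divide_right_mono)
  qed
  finally show "\<bar>D\<bar> \<le> (1 / (1 - \<beta> * \<bar>p00 - p10\<bar>)) * max 1 ((R1 - R0) / (\<rho>1 - \<rho>0)) * (\<rho>1 - \<rho>0)"
    by simp
qed

end
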